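(* Let $H\subset\mathbb{R}^n$ be a bounded domain and let $u_1,u_2\in C^2(H)\cap C(\overline H)$ be bounded functions with $D_{H,\varphi}u_1\le D_{H,\varphi}u_2$ in $H$ and $u_1=u_2=\varphi$ on $\partial H$. Then $u_1\le u_2$ in $H$.
   Context: For an open set $H\subset\mathbb{R}^n$, a function $\varphi$ on $\partial H$ and $u$ on $\overline H$ with $u=\varphi$ on $\partial H$, let $v$ be the bounded harmonic function in $\Omega=H\times(0,\infty)$, continuous up to the boundary, with $v(x,0)=u(x)$ for $x\in H$ and $v(x,\lambda)=\varphi(x)$ on $\partial H\times[0,\infty)$. Define $D_{H,\varphi}u(x):=-\partial_\lambda v(x,0)$ for $x\in H$. *)

theory Defs
  imports "HOL-Analysis.Analysis"
begin

definition C2_with :: "'a::euclidean_space set \<Rightarrow> ('a \<Rightarrow> real) \<Rightarrow> ('a \<Rightarrow> 'a \<Rightarrow>\<^sub>L real)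
    \<Rightarrow> ('a \<Rightarrow> 'a \<Rightarrow>\<^sub>L ('a \<Rightarrow>\<^sub>L real)) \<Rightarrow> bool" where
  "C2_with S f f' f'' \<longleftrightarrow>
     (\<forall>z\<in>S. (f has_derivative blinfun_apply (f' z)) (at z)
           \<and> (f' has_derivative blinfun_apply (f'' z)) (at z))
     \<and> continuous_on S f''"

definition C2_on :: "'a::euclidean_space set \<Rightarrow> ('a \<Rightarrow> real) \<Rightarrow> bool" where
  "C2_on S f \<longleftrightarrow> (\<exists>f' f''. C2_with S f f' f'')"

definition harmonic_on :: "'a::euclidean_space set \<Rightarrow> ('a \<Rightarrow> real) \<Rightarrow> bool" where
  "harmonic_on S f \<longleftrightarrow> open S \<and> (\<exists>f' f''. C2_with S f f' f'' \<and>
      (\<forall>z\<in>S. (\<Sum>b\<in>Basis. blinfun_apply (blinfun_apply (f'' z) b) b) = 0))"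

definition harmonic_ext :: "'a::euclidean_space set \<Rightarrow> ('a \<Rightarrow> real) \<Rightarrow> ('a \<Rightarrow> real)
    \<Rightarrow> ('a \<times> real \<Rightarrow> real) \<Rightarrow> bool" where
  "harmonic_ext H \<phi> u v \<longleftrightarrow>
     harmonic_on (H \<times> {0<..}) v
     \<and> bounded (v ` (H \<times> {0<..}))
     \<and> continuous_on (closure (H \<times> {0<..})) v
     \<and> (\<forall>x\<in>H. v (x, 0) = u x)
     \<and> (\<forall>x\<in>frontier H. \<forall>s\<ge>0. v (x, s) = \<phi> x)"

text \<open>DtN_has H phi u x d  means  D_{H,phi} u (x) = d, i.e. d = - d/d lambda v(x,0)
  (one-sided derivative at lambda = 0) for the harmonic extension v.\<close>
definition DtN_has :: "'a::euclidean_space set \<Rightarrow> ('a \<Rightarrow> real) \<Rightarrow> ('a \<Rightarrow> real)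
    \<Rightarrow> 'a \<Rightarrow> real \<Rightarrow> bool" where
  "DtN_has H \<phi> u x d \<longleftrightarrow>
     (\<exists>v. harmonic_ext H \<phi> u v \<and>
          ((\<lambda>t. v (x, t)) has_real_derivative (- d)) (at 0 within {0..}))"

end

theory Submission
  imports Defs
begin

(* If v1, v2 are the bounded harmonic extensions of u1, u2 to the half cylinder
   Omega = H x (0,oo), then w = v2 - v1 is bounded and harmonic, vanishes on the lateral
   boundary (both equal phi there), and its normal derivative at the bottom is
   D u1 - D u2 <= 0.  The heart of the proof is a minimum principle for such w
   (half_cylinder_minimum_principle), proved with the barrier
       z = w + delta s + epsilon (exp (-s) - |x|^2),    0 < delta < epsilon.
   z is strictly superharmonic, so it has no interior minimum (second derivative test
   along the coordinate directions); at the bottom its normal derivative is negative,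
   so it has no minimum there either; far up, delta s beats the bound of w.  Hence the
   minimum of z over a truncated cylinder is >= -epsilon B^2, so w >= -epsilon C, and
   w >= 0 as epsilon -> 0.  The same principle gives uniqueness of the harmonic
   extension, so D u (x) is well defined; evaluating w >= 0 at s = 0 gives u1 <= u2. *)

lemma harmonic_on_diff:
  assumes "harmonic_on S f" "harmonic_on S g"
  shows "harmonic_on S (\<lambda>y. f y - g y)"
proof -
  obtain f' f'' where f: "C2_with S f f' f''"
    "\<forall>z\<in>S. (\<Sum>b\<in>Basis. blinfun_apply (blinfun_apply (f'' z) b) b) = 0"
    using assms(1) unfolding harmonic_on_def by blast
  obtain g' g'' where g: "C2_with S g g' g''"
    "\<forall>z\<in>S. (\<Sum>b\<in>Basis. blinfun_apply (blinfun_apply (g'' z) b) b) = 0"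
    using assms(2) unfolding harmonic_on_def by blast
  have "C2_with S (\<lambda>y. f y - g y) (\<lambda>y. f' y - g' y) (\<lambda>y. f'' y - g'' y)"
    using f(1) g(1) unfolding C2_with_def minus_blinfun.rep_eq fun_diff_def
    by (auto intro!: has_derivative_diff continuous_on_diff)
  moreover have "\<forall>z\<in>S. (\<Sum>b\<in>Basis. blinfun_apply (blinfun_apply (f'' z - g'' z) b) b) = 0"
    using f(2) g(2) by (simp add: blinfun.diff_left sum_subtractf)
  ultimately show ?thesis using assms(1) unfolding harmonic_on_def by blast
qed

lemma line_has_real_derivative:
  fixes f :: "'a::real_normed_vector \<Rightarrow> real"
  assumes "(f has_derivative F) (at (p + t *\<^sub>R b))"
  shows "((\<lambda>s. f (p + s *\<^sub>R b)) has_real_derivative F b) (at t)"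
proof -
  have "((\<lambda>s. p + s *\<^sub>R b) has_derivative (\<lambda>s. s *\<^sub>R b)) (at t)"
    by (auto intro!: derivative_eq_intros)
  from has_derivative_compose[OF this assms]
  have "((\<lambda>s. f (p + s *\<^sub>R b)) has_derivative (\<lambda>s. F (s *\<^sub>R b))) (at t)"
    by (simp add: o_def)
  moreover have "(\<lambda>s. F (s *\<^sub>R b)) = (*) (F b)"
    using has_derivative_linear[OF assms] by (auto simp: linear_cmul mult.commute)
  ultimately show ?thesis by (simp add: has_field_derivative_def)
qed

lemma local_min_second_derivative_nonneg:
  fixes g g' :: "real \<Rightarrow> real"
  assumes r: "r > 0"
    and g': "\<And>t. \<bar>t\<bar> < r \<Longrightarrow> (g has_real_derivative g' t) (at t)"
    and g'': "(g' has_real_derivative D) (at 0)"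
    and min: "\<And>t. \<bar>t\<bar> < r \<Longrightarrow> g 0 \<le> g t"
  shows "D \<ge> 0"
proof (rule ccontr)
  assume "\<not> D \<ge> 0"
  hence D: "D < 0" by simp
  have g'0: "g' 0 = 0"
    using DERIV_local_min[OF g'[of 0] r] min r by auto
  have "(\<lambda>h. (g' (0 + h) - g' 0) / h) \<midarrow>0\<rightarrow> D"
    using g'' DERIV_def by blast
  hence "\<forall>\<^sub>F h in at 0. g' h / h < 0"
    using D g'0 by (auto dest: order_tendstoD)
  then obtain \<eta> where \<eta>: "\<eta> > 0" "\<And>h. h \<noteq> 0 \<Longrightarrow> \<bar>h\<bar> < \<eta> \<Longrightarrow> g' h / h < 0"
    by (auto simp: eventually_at)
  define b where "b = min \<eta> r / 2"
  have b: "0 < b" "b < \<eta>" "b < r" using \<eta> r by (auto simp: b_def)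
  have "g b < g 0"
  proof (rule DERIV_neg_imp_decreasing_open[OF b(1)])
    fix x assume x: "0 < x" "x < b"
    have "g' x < 0" using \<eta>(2)[of x] x b by (simp add: divide_less_0_iff)
    thus "\<exists>y. DERIV g x :> y \<and> y < 0" using g'[of x] x b by auto
  next
    show "continuous_on {0..b} g"
      by (rule DERIV_continuous_on[where D=g'])
        (use g' b in \<open>auto intro: has_field_derivative_at_within\<close>)
  qed
  with min[of b] b show False by simp
qed

lemma local_min_second_directional_derivative_nonneg:
  fixes f :: "'a::real_normed_vector \<Rightarrow> real"
  assumes r: "r > 0"
    and f': "\<And>y. y \<in> ball q r \<Longrightarrow> (f has_derivative F' y) (at y)"
    and f'': "((\<lambda>y. F' y b) has_derivative F'') (at q)"
    and min: "\<And>y. y \<in> ball q r \<Longrightarrow> f q \<le> f y"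
  shows "F'' b \<ge> 0"
proof -
  define \<rho> where "\<rho> = r / (norm b + 1)"
  have \<rho>: "\<rho> > 0" using r by (simp add: \<rho>_def add_nonneg_pos)
  have in_ball: "q + t *\<^sub>R b \<in> ball q r" if "\<bar>t\<bar> < \<rho>" for t
  proof -
    have "\<bar>t\<bar> * norm b \<le> \<bar>t\<bar> * (norm b + 1)" by (simp add: mult_left_mono)
    also have "\<dots> < r" using that by (simp add: \<rho>_def pos_less_divide_eq add_nonneg_pos)
    finally show ?thesis by (simp add: dist_norm)
  qed
  show ?thesis
  proof (rule local_min_second_derivative_nonneg[OF \<rho>])
    fix t :: real assume t: "\<bar>t\<bar> < \<rho>"
    show "((\<lambda>s. f (q + s *\<^sub>R b)) has_real_derivative F' (q + t *\<^sub>R b) b) (at t)"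
      by (rule line_has_real_derivative) (use f' in_ball[OF t] in auto)
    show "f (q + 0 *\<^sub>R b) \<le> f (q + t *\<^sub>R b)"
      using min in_ball[OF t] by simp
  next
    show "((\<lambda>t. F' (q + t *\<^sub>R b) b) has_real_derivative F'' b) (at 0)"
      by (rule line_has_real_derivative) (use f'' in simp)
  qed
qed

lemma one_sided_negative_derivative:
  fixes f :: "real \<Rightarrow> real"
  assumes "(f has_real_derivative D) (at 0 within {0..})" "D < 0" "r > 0"
  shows "\<exists>t. 0 < t \<and> t < r \<and> f t < f 0"
proof -
  have "((\<lambda>y. (f y - f 0) / (y - 0)) \<longlongrightarrow> D) (at 0 within {0..})"
    using assms(1) has_field_derivative_iff by blast
  hence "\<forall>\<^sub>F y in at 0 within {0..}. (f y - f 0) / y < 0"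
    using assms(2) by (auto dest: order_tendstoD)
  then obtain d where d: "d > 0" "\<And>y. 0 \<le> y \<Longrightarrow> y \<noteq> 0 \<Longrightarrow> \<bar>y\<bar> < d \<Longrightarrow> (f y - f 0) / y < 0"
    by (auto simp: eventually_at)
  define t where "t = min d (r) / 2"
  have t: "0 < t" "t < d" "t < r" using d assms by (auto simp: t_def)
  have "f t < f 0" using d(2)[of t] t by (simp add: divide_less_0_iff)
  thus ?thesis using t by auto
qed

text \<open>The penalty added to w in the minimum principle.  On the half cylinder
  H \<times> [0,\<infinity>) its Laplacian \<epsilon> (exp (- s) - 2 n) is negative, its normal derivative at
  the bottom is \<delta> - \<epsilon> < 0, and the term \<delta> s dominates any bounded function for
  large s; the penalty itself is O(\<epsilon>) on bounded regions.\<close>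
definition barrier :: "real \<Rightarrow> real \<Rightarrow> 'a::real_inner \<times> real \<Rightarrow> real" where
  "barrier \<epsilon> \<delta> y = \<delta> * snd y + \<epsilon> * (exp (- snd y) - fst y \<bullet> fst y)"

definition barrier_deriv :: "real \<Rightarrow> real \<Rightarrow> 'a::real_inner \<times> real \<Rightarrow> 'a \<times> real \<Rightarrow> real" where
  "barrier_deriv \<epsilon> \<delta> y h = \<delta> * snd h - \<epsilon> * (snd h * exp (- snd y) + 2 * (fst y \<bullet> fst h))"

lemma barrier_has_derivative:
  "(barrier \<epsilon> \<delta> has_derivative barrier_deriv \<epsilon> \<delta> y) (at y)"
  unfolding barrier_def[abs_def] barrier_deriv_def[abs_def]
  by (auto intro!: derivative_eq_intros simp: algebra_simps inner_commute)

lemma barrier_deriv_has_derivative: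
  "((\<lambda>y. barrier_deriv \<epsilon> \<delta> y b) has_derivative
     (\<lambda>h. \<epsilon> * (snd h * snd b * exp (- snd y) - 2 * (fst h \<bullet> fst b)))) (at y)"
  unfolding barrier_deriv_def
  by (auto intro!: derivative_eq_intros simp: algebra_simps inner_commute)

lemma sum_Basis_prod_real:
  fixes f :: "'a::euclidean_space \<times> real \<Rightarrow> real"
  shows "sum f Basis = (\<Sum>i\<in>Basis. f (i, 0)) + f (0, 1)"
proof -
  have "inj_on (\<lambda>u. (u::'a, 0::real)) Basis" "inj_on (\<lambda>u. (0::'a, u::real)) Basis"
    by (auto intro!: inj_onI)
  thus ?thesis
    unfolding Basis_prod_def by (subst sum.union_disjoint) (auto simp: sum.reindex)
qed

lemma barrier_laplacian:
  "(\<Sum>b\<in>(Basis :: ('a::euclidean_space \<times> real) set).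
      \<epsilon> * (snd b * snd b * exp (- snd y) - 2 * (fst b \<bullet> fst b)))
   = \<epsilon> * (exp (- snd y) - 2 * real DIM('a))"
  by (subst sum_Basis_prod_real) (simp add: algebra_simps)

lemma barrier_deriv_bottom:
  "((\<lambda>t. barrier \<epsilon> \<delta> (x, t)) has_real_derivative \<delta> - \<epsilon>) (at 0 within {0..})"
  unfolding barrier_def by (auto intro!: derivative_eq_intros)

lemma barrier_lower_bound:
  assumes "\<epsilon> \<ge> 0" "norm x \<le> B"
  shows "barrier \<epsilon> \<delta> (x, s) \<ge> \<delta> * s - \<epsilon> * B\<^sup>2"
proof -
  have "x \<bullet> x \<le> B\<^sup>2" using assms(2) by (simp add: power2_norm_eq_inner[symmetric] power_mono)
  hence "- B\<^sup>2 \<le> exp (- s) - x \<bullet> x" using exp_gt_zero[of "- s"] by linarith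
  hence "\<epsilon> * (- B\<^sup>2) \<le> \<epsilon> * (exp (- s) - x \<bullet> x)" using assms(1) by (rule mult_left_mono)
  thus ?thesis by (simp add: barrier_def)
qed

lemma barrier_upper_bound:
  assumes "0 \<le> \<delta>" "\<delta> \<le> \<epsilon>" "s \<ge> 0"
  shows "barrier \<epsilon> \<delta> (x, s) \<le> \<epsilon> * (s + 1)"
proof -
  have "\<delta> * s \<le> \<epsilon> * s" using assms by (simp add: mult_right_mono)
  moreover have "exp (- s) - x \<bullet> x \<le> 1"
    using assms(3) inner_ge_zero[of x] by (smt (verit) exp_le_one_iff)
  hence "\<epsilon> * (exp (- s) - x \<bullet> x) \<le> \<epsilon> * 1"
    using assms by (intro mult_left_mono) auto
  ultimately show ?thesis by (simp add: barrier_def algebra_simps)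
qed

text \<open>A harmonic function plus the barrier (with \<epsilon> > 0) is strictly superharmonic
  in s > 0, hence cannot have a local minimum there.\<close>
lemma harmonic_plus_barrier_no_interior_min:
  fixes w :: "'a::euclidean_space \<times> real \<Rightarrow> real"
  assumes harm: "harmonic_on U w" and ball: "ball q r \<subseteq> U" and r: "r > 0"
    and q: "snd q > 0" and \<epsilon>: "\<epsilon> > 0"
    and min: "\<And>y. y \<in> ball q r \<Longrightarrow> w q + barrier \<epsilon> \<delta> q \<le> w y + barrier \<epsilon> \<delta> y"
  shows False
proof -
  obtain w' w'' where w: "C2_with U w w' w''"
    and lap: "\<forall>z\<in>U. (\<Sum>b\<in>Basis. blinfun_apply (blinfun_apply (w'' z) b) b) = 0"
    using harm unfolding harmonic_on_def by blast
  have qU: "q \<in> U" using ball r by auto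
  let ?P'' = "\<lambda>b h. \<epsilon> * (snd h * snd b * exp (- snd q) - 2 * (fst h \<bullet> fst b))"
  have "w'' q b b + ?P'' b b \<ge> 0" if b: "b \<in> Basis" for b
  proof (rule local_min_second_directional_derivative_nonneg
      [where f = "\<lambda>y. w y + barrier \<epsilon> \<delta> y" and F'' = "\<lambda>h. w'' q h b + ?P'' b h", OF r _ _ min])
    fix y assume "y \<in> ball q r"
    hence "(w has_derivative w' y) (at y)" using w ball unfolding C2_with_def by auto
    thus "((\<lambda>y. w y + barrier \<epsilon> \<delta> y) has_derivative (\<lambda>h. w' y h + barrier_deriv \<epsilon> \<delta> y h)) (at y)"
      by (intro has_derivative_add barrier_has_derivative)
  next
    have "(w' has_derivative w'' q) (at q)" using w qU unfolding C2_with_def by auto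
    from bounded_linear.has_derivative[OF blinfun.bounded_linear_left[of b] this]
    show "((\<lambda>y. w' y b + barrier_deriv \<epsilon> \<delta> y b) has_derivative (\<lambda>h. w'' q h b + ?P'' b h)) (at q)"
      by (intro has_derivative_add barrier_deriv_has_derivative) simp
  qed
  hence "0 \<le> (\<Sum>b\<in>Basis. w'' q b b + ?P'' b b)" by (intro sum_nonneg) auto
  also have "\<dots> = \<epsilon> * (exp (- snd q) - 2 * real DIM('a))"
    using lap qU barrier_laplacian by (simp add: sum.distrib)
  also have "\<dots> < 0"
  proof -
    have "exp (- snd q) < 1" using q by simp
    moreover have "real DIM('a) \<ge> 1" by (simp add: Suc_le_eq)
    ultimately have "exp (- snd q) - 2 * real DIM('a) < 0" by linarith
    thus ?thesis using \<epsilon> by (simp add: mult_pos_neg)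
  qed
  finally show False by simp
qed

lemma barrier_decreases_from_bottom:
  assumes "((\<lambda>t. w (x, t)) has_real_derivative D) (at 0 within {0..})" "D \<le> 0" "\<delta> < \<epsilon>" "R > 0"
  shows "\<exists>t. 0 < t \<and> t < R \<and> w (x, t) + barrier \<epsilon> \<delta> (x, t) < w (x, 0) + barrier \<epsilon> \<delta> (x, 0)"
proof (rule one_sided_negative_derivative[OF _ _ \<open>R > 0\<close>])
  show "((\<lambda>t. w (x, t) + barrier \<epsilon> \<delta> (x, t)) has_real_derivative D + (\<delta> - \<epsilon>)) (at 0 within {0..})"
    using assms(1) barrier_deriv_bottom by (rule DERIV_add)
  show "D + (\<delta> - \<epsilon>) < 0" using assms(2,3) by simp
qed

lemma minimizer_on_truncated_cylinder:
  fixes w :: "'a::euclidean_space \<times> real \<Rightarrow> real"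
  assumes H: "open H" and harm: "harmonic_on (H \<times> {0<..}) w" and \<epsilon>: "\<epsilon> > 0" "\<delta> < \<epsilon>"
    and bottom: "\<forall>x\<in>H. w (x, 0) \<ge> 0 \<or>
                   (\<exists>D\<le>0. ((\<lambda>t. w (x, t)) has_real_derivative D) (at 0 within {0..}))"
    and qK: "(x, s) \<in> closure H \<times> {0..R}"
    and min: "\<And>y. y \<in> closure H \<times> {0..R} \<Longrightarrow>
                w (x, s) + barrier \<epsilon> \<delta> (x, s) \<le> w y + barrier \<epsilon> \<delta> y"
  shows "x \<in> frontier H \<or> s = R \<or> (s = 0 \<and> w (x, 0) \<ge> 0)"
proof -
  consider "x \<notin> H" | "s = R" | "x \<in> H" "s = 0" "s < R" | "x \<in> H" "0 < s" "s < R"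
    using qK by force
  thus ?thesis
  proof cases
    case 1
    thus ?thesis using qK H by (simp add: frontier_def interior_open)
  next
    case 3
    show ?thesis
    proof (rule ccontr)
      assume "\<not> ?thesis"
      then obtain D where "D \<le> 0" "((\<lambda>t. w (x, t)) has_real_derivative D) (at 0 within {0..})"
        using bottom 3 by auto
      then obtain t where "0 < t" "t < R"
          "w (x, t) + barrier \<epsilon> \<delta> (x, t) < w (x, 0) + barrier \<epsilon> \<delta> (x, 0)"
        using barrier_decreases_from_bottom \<epsilon>(2) 3 by blast
      thus False using min[of "(x, t)"] qK 3 by auto
    qed
  next
    case 4
    have "open (H \<times> {0<..<R})" using H by (simp add: open_Times)
    moreover have "(x, s) \<in> H \<times> {0<..<R}" using 4 by simp
    ultimately obtain r where r: "r > 0" "ball (x, s) r \<subseteq> H \<times> {0<..<R}"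
      by (meson open_contains_ball)
    have "H \<times> {0<..<R} \<subseteq> closure H \<times> {0..R}" using closure_subset by auto
    hence "\<And>y. y \<in> ball (x, s) r \<Longrightarrow> w (x, s) + barrier \<epsilon> \<delta> (x, s) \<le> w y + barrier \<epsilon> \<delta> y"
      using r(2) min by blast
    moreover have "ball (x, s) r \<subseteq> H \<times> {0<..}" using r(2) by auto
    ultimately have False
      using harmonic_plus_barrier_no_interior_min[OF harm _ r(1) _ \<epsilon>(1), of "(x, s)" \<delta>] 4 by simp
    thus ?thesis ..
  qed simp
qed

text \<open>The minimum of w plus the barrier over a large truncated
  cylinder is attained on the boundary, where it is bounded below; the top is
  harmless once \<delta> R exceeds the bound M of w.\<close>
lemma half_cylinder_penalized_estimate:
  fixes H :: "'a::euclidean_space set" and w :: "'a \<times> real \<Rightarrow> real"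
  assumes H: "open H" "bounded H" and harm: "harmonic_on (H \<times> {0<..}) w"
    and bd: "bounded (w ` (H \<times> {0<..}))" and cont: "continuous_on (closure (H \<times> {0<..})) w"
    and lateral: "\<forall>x\<in>frontier H. \<forall>s\<ge>0. w (x, s) \<ge> 0"
    and bottom: "\<forall>x\<in>H. w (x, 0) \<ge> 0 \<or>
                   (\<exists>D\<le>0. ((\<lambda>t. w (x, t)) has_real_derivative D) (at 0 within {0..}))"
    and B: "\<forall>x\<in>closure H. norm x \<le> B" and \<epsilon>: "\<epsilon> > 0" and x0: "x0 \<in> H" and s0: "s0 \<ge> 0"
  shows "w (x0, s0) \<ge> - \<epsilon> * (B\<^sup>2 + s0 + 1)"
proof -
  have closure_cyl: "closure (H \<times> {0<..}) = closure H \<times> {0::real..}"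
    by (simp add: closure_Times)
  obtain M where "\<forall>y\<in>H \<times> {0<..}. norm (w y) \<le> M"
    using bd by (auto simp: bounded_iff)
  hence "w ` closure (H \<times> {0<..}) \<subseteq> cball 0 M"
    by (intro image_closure_subset[OF cont]) auto
  hence M: "\<And>y. y \<in> closure H \<times> {0..} \<Longrightarrow> - M \<le> w y"
    using closure_cyl by (force simp: abs_le_iff)
  define \<delta> where "\<delta> = \<epsilon> / 2"
  have \<delta>: "0 < \<delta>" "\<delta> < \<epsilon>" using \<epsilon> by (auto simp: \<delta>_def)
  define R where "R = max (s0 + 1) (2 * M / \<epsilon>)"
  have "2 * M / \<epsilon> \<le> R" by (simp add: R_def)
  hence "\<delta> * R \<ge> M" using \<epsilon> by (simp add: \<delta>_def field_simps)
  define K where "K = closure H \<times> {0..R}"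
  define z where "z y = w y + barrier \<epsilon> \<delta> y" for y
  have "compact K" unfolding K_def
    using H(2) by (intro compact_Times compact_Icc) (simp add: compact_closure)
  moreover have "K \<noteq> {}" using x0 s0 closure_subset by (fastforce simp: K_def R_def)
  moreover have "continuous_on K w"
    using cont by (rule continuous_on_subset) (auto simp: closure_cyl K_def)
  hence "continuous_on K z"
    unfolding z_def barrier_def by (intro continuous_intros)
  ultimately obtain x s where q: "(x, s) \<in> K" and min: "\<And>y. y \<in> K \<Longrightarrow> z (x, s) \<le> z y"
    using continuous_attains_inf by (metis surj_pair)
  have z_min: "z (x, s) \<ge> - \<epsilon> * B\<^sup>2"
  proof -
    have bar: "barrier \<epsilon> \<delta> (x, s) \<ge> \<delta> * s - \<epsilon> * B\<^sup>2"
      using q B \<epsilon> by (intro barrier_lower_bound) (auto simp: K_def)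
    have "x \<in> frontier H \<or> s = R \<or> (s = 0 \<and> w (x, 0) \<ge> 0)"
      by (rule minimizer_on_truncated_cylinder[OF H(1) harm \<epsilon> \<delta>(2) bottom q[unfolded K_def]])
        (use min in \<open>simp add: z_def K_def\<close>)
    moreover have "- M \<le> w (x, s)" using M q by (auto simp: K_def)
    moreover have "0 \<le> \<delta> * s" using \<delta> q by (simp add: K_def)
    ultimately have "w (x, s) + \<delta> * s \<ge> 0"
      using lateral q \<open>\<delta> * R \<ge> M\<close> by (auto simp: K_def)
    with bar show ?thesis by (simp add: z_def)
  qed
  have "(x0, s0) \<in> K" using x0 s0 closure_subset by (auto simp: K_def R_def)
  hence "- \<epsilon> * B\<^sup>2 \<le> w (x0, s0) + barrier \<epsilon> \<delta> (x0, s0)"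
    using min z_min unfolding z_def by fastforce
  moreover have "barrier \<epsilon> \<delta> (x0, s0) \<le> \<epsilon> * (s0 + 1)"
    using \<delta> s0 by (intro barrier_upper_bound) auto
  ultimately show ?thesis by (simp add: algebra_simps)
qed

lemma half_cylinder_minimum_principle:
  fixes H :: "'a::euclidean_space set" and w :: "'a \<times> real \<Rightarrow> real"
  assumes H: "open H" "bounded H" and harm: "harmonic_on (H \<times> {0<..}) w"
    and bd: "bounded (w ` (H \<times> {0<..}))" and cont: "continuous_on (closure (H \<times> {0<..})) w"
    and lateral: "\<forall>x\<in>frontier H. \<forall>s\<ge>0. w (x, s) \<ge> 0"
    and bottom: "\<forall>x\<in>H. w (x, 0) \<ge> 0 \<or>
                   (\<exists>D\<le>0. ((\<lambda>t. w (x, t)) has_real_derivative D) (at 0 within {0..}))"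
    and x0: "x0 \<in> H" and s0: "s0 \<ge> 0"
  shows "w (x0, s0) \<ge> 0"
proof -
  obtain B where B: "\<forall>x\<in>closure H. norm x \<le> B"
    using bounded_closure[OF H(2)] by (auto simp: bounded_iff)
  define C where "C = B\<^sup>2 + s0 + 1"
  have C: "C > 0" using s0 by (simp add: C_def add_nonneg_pos)
  show ?thesis
  proof (rule field_le_epsilon)
    fix e :: real assume "e > 0"
    hence "w (x0, s0) \<ge> - (e / C) * C"
      using C half_cylinder_penalized_estimate[OF assms(1-7) B _ x0 s0, where \<epsilon> = "e / C"]
      by (simp add: C_def)
    thus "0 \<le> w (x0, s0) + e" using C by simp
  qed
qed

lemma harmonic_ext_comparison:
  assumes H: "open H" "bounded H"
    and v1: "harmonic_ext H \<phi> u1 v1" and v2: "harmonic_ext H \<phi> u2 v2"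
    and bottom: "\<forall>y\<in>H. u1 y \<le> u2 y \<or>
       (\<exists>D\<le>0. ((\<lambda>t. v2 (y, t) - v1 (y, t)) has_real_derivative D) (at 0 within {0..}))"
    and x: "x \<in> H" and s: "s \<ge> 0"
  shows "v1 (x, s) \<le> v2 (x, s)"
proof -
  have "0 \<le> v2 (x, s) - v1 (x, s)"
  proof (rule half_cylinder_minimum_principle[where w = "\<lambda>y. v2 y - v1 y", OF H _ _ _ _ _ x s])
    show "harmonic_on (H \<times> {0<..}) (\<lambda>y. v2 y - v1 y)"
      using v1 v2 by (intro harmonic_on_diff) (auto simp: harmonic_ext_def)
    show "bounded ((\<lambda>y. v2 y - v1 y) ` (H \<times> {0<..}))"
      using v1 v2 by (intro bounded_minus_comp) (auto simp: harmonic_ext_def)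
    show "continuous_on (closure (H \<times> {0<..})) (\<lambda>y. v2 y - v1 y)"
      using v1 v2 by (intro continuous_on_diff) (auto simp: harmonic_ext_def)
  qed (use v1 v2 bottom in \<open>auto simp: harmonic_ext_def\<close>)
  thus ?thesis by simp
qed

lemma harmonic_ext_unique:
  assumes "open H" "bounded H" "harmonic_ext H \<phi> u v" "harmonic_ext H \<phi> u v'" "x \<in> H" "s \<ge> 0"
  shows "v (x, s) = v' (x, s)"
  using harmonic_ext_comparison[OF assms(1,2,3,4) _ assms(5,6)]
    harmonic_ext_comparison[OF assms(1,2,4,3) _ assms(5,6)]
  by fastforce

lemma DtN_has_derivative_of_any_ext:
  assumes H: "open H" "bounded H" and v: "harmonic_ext H \<phi> u v"
    and DtN: "DtN_has H \<phi> u x d" and x: "x \<in> H"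
  shows "((\<lambda>t. v (x, t)) has_real_derivative - d) (at 0 within {0..})"
proof -
  obtain v' where v': "harmonic_ext H \<phi> u v'"
    and d: "((\<lambda>t. v' (x, t)) has_real_derivative - d) (at 0 within {0..})"
    using DtN unfolding DtN_has_def by blast
  have same: "v' (x, t) = v (x, t)" if "t \<in> {0..}" for t
    using harmonic_ext_unique[OF H v' v x] that by simp
  from d show ?thesis
    unfolding has_field_derivative_def
    by (rule has_derivative_transform_within[where d = 1]) (use same in auto)
qed

theorem mainTheorem8:
  fixes H :: "'a::euclidean_space set"
    and \<phi> u1 u2 :: "'a \<Rightarrow> real"
  assumes "open H" and "connected H" and "H \<noteq> {}" and "bounded H"
    and "C2_on H u1" and "continuous_on (closure H) u1" and "bounded (u1 ` closure H)"
    and "C2_on H u2" and "continuous_on (closure H) u2" and "bounded (u2 ` closure H)"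
    and "\<forall>x\<in>frontier H. u1 x = \<phi> x \<and> u2 x = \<phi> x"
    and "\<forall>x\<in>H. \<exists>d1 d2. DtN_has H \<phi> u1 x d1 \<and> DtN_has H \<phi> u2 x d2 \<and> d1 \<le> d2"
  shows "\<forall>x\<in>H. u1 x \<le> u2 x"
proof
  fix x assume x: "x \<in> H"
  obtain d1 d2 where "DtN_has H \<phi> u1 x d1" "DtN_has H \<phi> u2 x d2"
    using assms(12) x by blast
  then obtain v1 v2 where v1: "harmonic_ext H \<phi> u1 v1" and v2: "harmonic_ext H \<phi> u2 v2"
    unfolding DtN_has_def by blast
  have "\<exists>D\<le>0. ((\<lambda>t. v2 (y, t) - v1 (y, t)) has_real_derivative D) (at 0 within {0..})"
    if y: "y \<in> H" for y
  proof -
    obtain e1 e2 where e1: "DtN_has H \<phi> u1 y e1" and e2: "DtN_has H \<phi> u2 y e2" and "e1 \<le> e2"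
      using assms(12) y by blast
    have "((\<lambda>t. v2 (y, t) - v1 (y, t)) has_real_derivative - e2 - - e1) (at 0 within {0..})"
      by (intro DERIV_diff DtN_has_derivative_of_any_ext[OF assms(1,4) v2 e2 y]
          DtN_has_derivative_of_any_ext[OF assms(1,4) v1 e1 y])
    with \<open>e1 \<le> e2\<close> show ?thesis by (intro exI[of _ "- e2 - - e1"]) auto
  qed
  hence "v1 (x, 0) \<le> v2 (x, 0)"
    using harmonic_ext_comparison[OF assms(1,4) v1 v2 _ x] by blast
  thus "u1 x \<le> u2 x" using v1 v2 x by (simp add: harmonic_ext_def)
qed

end
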